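(* Let $P_{XY}$ be a probability distribution on $\mathcal X\times\mathcal Y$ (finite sets) with $X$-marginal $P_X$. For each $n$ let $\mathcal F_n^{P_X}=\{P_X^{\times n}\times Q_{Y^n}: Q_{Y^n}\in\mathcal P(\mathcal Y^n)\}$. Then for every $\varepsilon\in(0,1)$ the limit $\lim_{n\to\infty}\frac1n D_H^\varepsilon(\mathcal F_n^{P_X}\|P_{XY}^{\times n})$ exists and equals $U(X;Y)$. Equivalently, $$U(X;Y)=\mathrm{Stein}(\mathcal F^{P_X}\|P_{XY})=\mathrm{Stein}^\dagger(\mathcal F^{P_X}\|P_{XY}).$$
   Context: $D(P\|Q)=\sum_x P(x)\log\frac{P(x)}{Q(x)}$ (with $0\log(0/q)=0$; $+\infty$ if $P\not\ll Q$). The umlaut information is $U(X;Y)=\min_{Q_Y\in\mathcal P(\mathcal Y)}D(P_X\times Q_Y\|P_{XY})$. For a set $\mathcal F_n$ of distributions on a finite set $\mathcal Z$ (null hypothesis) and a distribution $R$ on $\mathcal Z$ (alternative), a test is a function $T:\mathcal Z\to[0,1]$ (probability of accepting the null); its type I error is $\sup_{Q\in\mathcal F_n}\sum_z Q(z)(1-T(z))$ and its type II error is $\sum_z R(z)T(z)$. $D_H^\varepsilon(\mathcal F_n\|R)=-\log\min\{\text{type II error}:\text{type I error}\le\varepsilon\}$. For $\mathcal F=(\mathcal F_n)_n$ with $\mathcal F_n$ on $\mathcal Z^n$: $\mathrm{Stein}(\mathcal F\|R)=\lim_{\varepsilon\to0}\liminf_{n}\frac1nD_H^\varepsilon(\mathcal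 F_n\|R^{\times n})$ and $\mathrm{Stein}^\dagger(\mathcal F\|R)=\lim_{\varepsilon\to1^-}\limsup_n\frac1nD_H^\varepsilon(\mathcal F_n\|R^{\times n})$. *)

theory Defs
  imports "HOL-Analysis.Analysis"
begin

definition is_dist :: "'a set \<Rightarrow> ('a \<Rightarrow> real) \<Rightarrow> bool" where
  "is_dist A P \<longleftrightarrow> (\<forall>x\<in>A. 0 \<le> P x) \<and> sum P A = 1"

definition words :: "'a set \<Rightarrow> nat \<Rightarrow> 'a list set" where
  "words A n = {xs. set xs \<subseteq> A \<and> length xs = n}"

definition iid :: "('a \<Rightarrow> real) \<Rightarrow> 'a list \<Rightarrow> real" where
  "iid P xs = prod_list (map P xs)"

definition KL :: "'a set \<Rightarrow> ('a \<Rightarrow> real) \<Rightarrow> ('a \<Rightarrow> real) \<Rightarrow> ereal" where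
  "KL A P Q = (if \<exists>x\<in>A. P x \<noteq> 0 \<and> Q x = 0 then \<infinity>
     else ereal (\<Sum>x\<in>A. if P x = 0 then 0 else P x * ln (P x / Q x)))"

definition marginalX :: "('x \<times> 'y::finite \<Rightarrow> real) \<Rightarrow> 'x \<Rightarrow> real" where
  "marginalX PXY x = (\<Sum>y\<in>UNIV. PXY (x, y))"

definition umlaut :: "('x::finite \<times> 'y::finite \<Rightarrow> real) \<Rightarrow> ereal" where
  "umlaut PXY = (INF QY\<in>{QY. is_dist UNIV QY}.
       KL UNIV (\<lambda>(x, y). marginalX PXY x * QY y) PXY)"

text \<open>Hypothesis testing on a finite set A; a test T : A \<rightarrow> [0,1] is the probability of
  accepting the null hypothesis F (a set of distributions); R is the alternative.\<close>
definition tests :: "'a set \<Rightarrow> ('a \<Rightarrow> real) set" where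
  "tests A = {T. \<forall>z\<in>A. 0 \<le> T z \<and> T z \<le> 1}"

definition typeI :: "'a set \<Rightarrow> ('a \<Rightarrow> real) set \<Rightarrow> ('a \<Rightarrow> real) \<Rightarrow> real" where
  "typeI A F T = (SUP Q\<in>F. \<Sum>z\<in>A. Q z * (1 - T z))"

definition typeII :: "'a set \<Rightarrow> ('a \<Rightarrow> real) \<Rightarrow> ('a \<Rightarrow> real) \<Rightarrow> real" where
  "typeII A R T = (\<Sum>z\<in>A. R z * T z)"

definition DH :: "real \<Rightarrow> 'a set \<Rightarrow> ('a \<Rightarrow> real) set \<Rightarrow> ('a \<Rightarrow> real) \<Rightarrow> ereal" where
  "DH eps A F R =
    (let m = Inf {typeII A R T | T. T \<in> tests A \<and> typeI A F T \<le> eps}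
     in if m = 0 then \<infinity> else ereal (- ln m))"

definition nullFamily :: "('x \<Rightarrow> real) \<Rightarrow> nat \<Rightarrow> (('x \<times> 'y) list \<Rightarrow> real) set" where
  "nullFamily PX n = {Q. \<exists>QYn. is_dist (words (UNIV::'y set) n) QYn \<and>
      Q = (\<lambda>zs. iid PX (map fst zs) * QYn (map snd zs))}"

end

theory Submission
  imports Defs "HOL-Real_Asymp.Real_Asymp"
begin

text \<open>
  Converse. Fix \<open>Q\<^sub>Y\<close> with \<open>D = D(P\<^sub>X \<times> Q\<^sub>Y \<parallel> P\<^sub>X\<^sub>Y)\<close> finite. The \<open>n\<close>-fold
  product \<open>W\<^sub>n\<close> of \<open>P\<^sub>X \<times> Q\<^sub>Y\<close> lies in the null family, so a test with type I error at
  most \<open>\<epsilon>\<close> accepts at least \<open>1 - \<epsilon>\<close> of its mass. By a Chernoff bound, eventually at most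
  \<open>(1 - \<epsilon>) / 2\<close> of that mass lies where the likelihood ratio of \<open>W\<^sub>n\<close> against the
  \<open>n\<close>-fold product of \<open>P\<^sub>X\<^sub>Y\<close> exceeds \<open>exp (n (D + \<delta>))\<close>. Hence the type II error is at
  least \<open>exp (- n (D + \<delta>)) (1 - \<epsilon>) / 2\<close>, and minimising over \<open>Q\<^sub>Y\<close> gives
  \<open>limsup \<le> U(X;Y)\<close>.

  Achievability. Let \<open>G\<^sub>\<tau> y = \<Prod>\<^sub>x (max (P\<^sub>X\<^sub>Y (x, y)) \<tau> / P\<^sub>X x) powr P\<^sub>X x\<close>. The test
  comparing the products of \<open>max P\<^sub>X\<^sub>Y \<tau>\<close> and of \<open>exp \<delta> \<cdot> P\<^sub>X \<times> G\<^sub>\<tau>\<close> has type II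
  error at most \<open>exp (n \<delta>) (\<Sum>\<^sub>y G\<^sub>\<tau> y) ^ n\<close>. For every fixed output letter \<open>y\<close> the
  log-ratio \<open>ln (max P\<^sub>X\<^sub>Y \<tau> / (P\<^sub>X \<times> G\<^sub>\<tau>))\<close> has \<open>P\<^sub>X\<close>-mean zero, so a Chernoff bound
  makes the type I error vanish uniformly in the output sequence, hence uniformly over the
  null family. As \<open>\<tau> \<rightarrow> 0\<close>, \<open>\<Sum>\<^sub>y G\<^sub>\<tau> y\<close> tends to \<open>\<Sum>\<^sub>y G\<^sub>0 y\<close>, and \<open>Q\<^sub>Y\<close>
  proportional to \<open>G\<^sub>0\<close> witnesses \<open>U(X;Y) \<le> - ln (\<Sum>\<^sub>y G\<^sub>0 y)\<close>; hence
  \<open>liminf \<ge> U(X;Y)\<close>.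
\<close>

lemma is_dist_nonneg: "is_dist A P \<Longrightarrow> x \<in> A \<Longrightarrow> 0 \<le> P x"
  by (simp add: is_dist_def)

lemma marginalX_nonneg: "is_dist UNIV PXY \<Longrightarrow> 0 \<le> marginalX PXY x"
  by (auto simp: marginalX_def is_dist_def intro!: sum_nonneg)

lemma sum_marginalX:
  fixes PXY :: "'x::finite \<times> 'y::finite \<Rightarrow> real"
  shows "is_dist UNIV PXY \<Longrightarrow> (\<Sum>x\<in>UNIV. marginalX PXY x) = 1"
  by (simp add: is_dist_def marginalX_def sum.cartesian_product)

lemma is_dist_marginalX_times:
  fixes PXY :: "'x::finite \<times> 'y::finite \<Rightarrow> real"
  assumes P: "is_dist UNIV PXY" and QY: "is_dist UNIV QY"
  shows "is_dist UNIV (\<lambda>(x, y). marginalX PXY x * QY y)"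
proof -
  have "(\<Sum>z\<in>UNIV. case z of (x, y) \<Rightarrow> marginalX PXY x * QY y)
      = (\<Sum>x\<in>UNIV. marginalX PXY x) * (\<Sum>y\<in>UNIV. QY y)"
    by (simp add: sum_product sum.cartesian_product)
  then show ?thesis
    using marginalX_nonneg[OF P] sum_marginalX[OF P] QY by (auto simp: is_dist_def)
qed

lemma words_0: "words A 0 = {[]}"
  by (auto simp: words_def)

lemma words_Suc: "words A (Suc n) = (\<lambda>(a, xs). a # xs) ` (A \<times> words A n)"
  by (auto simp: words_def image_iff length_Suc_conv)

lemma finite_words: "finite A \<Longrightarrow> finite (words A n)"
  by (induction n) (auto simp: words_0 words_Suc)

lemma sum_words_Suc:
  "(\<Sum>xs\<in>words A (Suc n). f xs) = (\<Sum>a\<in>A. \<Sum>xs\<in>words A n. f (a # xs))"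
proof -
  have "inj_on (\<lambda>(a, xs). a # xs) (A \<times> words A n)"
    by (auto simp: inj_on_def)
  then show ?thesis
    by (simp add: words_Suc sum.reindex case_prod_unfold sum.cartesian_product)
qed

lemma sum_words_prod_list:
  fixes f :: "'a \<Rightarrow> real"
  shows "(\<Sum>xs\<in>words A n. prod_list (map f xs)) = (\<Sum>a\<in>A. f a) ^ n"
  by (induction n) (simp_all add: words_0 sum_words_Suc sum_distrib_left[symmetric] sum_distrib_right[symmetric])

lemma sum_words_prod_list_zip:
  fixes f :: "'a \<times> 'b \<Rightarrow> real"
  shows "(\<Sum>xs\<in>words A (length ys). prod_list (map f (zip xs ys)))
           = prod_list (map (\<lambda>y. \<Sum>x\<in>A. f (x, y)) ys)"
  by (induction ys) (simp_all add: words_0 sum_words_Suc sum_distrib_left[symmetric] sum_distrib_right[symmetric])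

lemma sum_words_times:
  "(\<Sum>zs\<in>words (A \<times> B) n. F zs) = (\<Sum>ys\<in>words B n. \<Sum>xs\<in>words A n. F (zip xs ys))"
proof -
  have "bij_betw (\<lambda>(xs, ys). zip xs ys) (words A n \<times> words B n) (words (A \<times> B) n)"
    by (rule bij_betwI[where g = "\<lambda>zs. (map fst zs, map snd zs)"])
       (auto simp: words_def set_zip zip_map_fst_snd; fastforce)+
  then have "(\<Sum>zs\<in>words (A \<times> B) n. F zs) = (\<Sum>(xs, ys)\<in>words A n \<times> words B n. F (zip xs ys))"
    by (simp add: sum.reindex_bij_betw[symmetric] case_prod_unfold)
  then show ?thesis
    by (simp add: sum.cartesian_product[symmetric] sum.swap[of _ "words A n"])
qed

lemma prod_list_map_mult:
  fixes f g :: "'a \<Rightarrow> real"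
  shows "prod_list (map (\<lambda>z. f z * g z) zs) = prod_list (map f zs) * prod_list (map g zs)"
  by (induction zs) (simp_all add: ac_simps)

lemma prod_list_map_divide:
  fixes f g :: "'a \<Rightarrow> real"
  shows "prod_list (map (\<lambda>z. f z / g z) zs) = prod_list (map f zs) / prod_list (map g zs)"
  by (induction zs) simp_all

lemma prod_list_map_exp:
  fixes f :: "'a \<Rightarrow> real"
  shows "prod_list (map (\<lambda>z. exp (f z)) zs) = exp (sum_list (map f zs))"
  by (induction zs) (simp_all add: exp_add)

lemma prod_list_map_pos:
  fixes f :: "'a \<Rightarrow> real"
  shows "(\<And>z. z \<in> set zs \<Longrightarrow> 0 < f z) \<Longrightarrow> 0 < prod_list (map f zs)"
  by (induction zs) simp_all

lemma prod_list_map_nonneg: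
  fixes f :: "'a \<Rightarrow> real"
  shows "(\<And>z. z \<in> set zs \<Longrightarrow> 0 \<le> f z) \<Longrightarrow> 0 \<le> prod_list (map f zs)"
  by (rule prod_list_nonneg) auto

lemma prod_list_map_mono:
  fixes f g :: "'a \<Rightarrow> real"
  shows "(\<And>z. z \<in> set zs \<Longrightarrow> 0 \<le> f z \<and> f z \<le> g z) \<Longrightarrow> prod_list (map f zs) \<le> prod_list (map g zs)"
  by (induction zs) (auto intro!: mult_mono prod_list_map_nonneg intro: order_trans)

lemma ln_prod_list_map:
  fixes f :: "'a \<Rightarrow> real"
  shows "(\<And>z. z \<in> set zs \<Longrightarrow> 0 < f z) \<Longrightarrow> ln (prod_list (map f zs)) = sum_list (map (\<lambda>z. ln (f z)) zs)"
proof (induction zs)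
  case (Cons a zs)
  have "0 < f a" "0 < prod_list (map f zs)"
    using Cons.prems by (auto intro: prod_list_map_pos)
  moreover have "ln (prod_list (map f zs)) = sum_list (map (\<lambda>z. ln (f z)) zs)"
    using Cons by simp
  ultimately show ?case by (simp add: ln_mult)
qed simp

lemma iid_nonneg: "(\<And>x. 0 \<le> P x) \<Longrightarrow> 0 \<le> iid P xs"
  unfolding iid_def by (rule prod_list_map_nonneg)

lemma sum_iid: "(\<Sum>xs\<in>words A n. iid P xs) = (\<Sum>a\<in>A. P a) ^ n"
  by (simp add: iid_def sum_words_prod_list)

lemma iid_map_fst_mult_iid_map_snd:
  "iid f (map fst zs) * iid g (map snd zs) = prod_list (map (\<lambda>(x, y). f x * g y) zs)"
  by (induction zs) (auto simp: iid_def)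

lemma iid_eq_prod_list_zip:
  "length xs = length ys \<Longrightarrow> iid f xs = prod_list (map (\<lambda>(x, y). f x) (zip xs ys))"
proof (induction xs arbitrary: ys)
  case (Cons a xs)
  then show ?case by (cases ys) (auto simp: iid_def)
qed (simp add: iid_def)

subsection \<open>Exponential moments\<close>

lemma exp_le_quadratic:
  assumes "\<bar>x::real\<bar> \<le> 1"
  shows "exp x \<le> 1 + x + x\<^sup>2"
proof (cases "0 \<le> x")
  case True
  then show ?thesis using exp_bound assms by auto
next
  case False
  define y where "y = - x"
  have y: "0 \<le> y" "y \<le> 1" using False assms by (auto simp: y_def)
  have "exp x = 1 / exp y" by (simp add: y_def exp_minus field_simps)
  also have "\<dots> \<le> 1 / (1 + y)" using y by (intro divide_left_mono) auto
  also have "\<dots> \<le> 1 - y + y\<^sup>2"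
  proof -
    have "1 \<le> (1 - y + y\<^sup>2) * (1 + y)"
      using y by (simp add: algebra_simps power2_eq_square power3_eq_cube)
    then show ?thesis using y by (simp add: divide_le_eq)
  qed
  finally show ?thesis by (simp add: y_def)
qed

lemma exp_moment_le:
  fixes w l :: "'z::finite \<Rightarrow> real"
  assumes w0: "\<And>z. 0 \<le> w z" and w1: "(\<Sum>z\<in>UNIV. w z) = 1"
    and M: "\<And>z. \<bar>l z\<bar> \<le> M" and s: "0 \<le> s" "s * M \<le> 1"
  shows "(\<Sum>z\<in>UNIV. w z * exp (s * l z)) \<le> exp (s * (\<Sum>z\<in>UNIV. w z * l z) + s\<^sup>2 * M\<^sup>2)"
proof -
  have sl: "\<bar>s * l z\<bar> \<le> 1" for z
    using M[of z] s by (auto simp: abs_mult intro: order_trans[OF mult_left_mono])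
  have l2: "(l z)\<^sup>2 \<le> M\<^sup>2" for z
    using M[of z] by (metis abs_le_square_iff abs_of_nonneg abs_ge_zero order_trans)
  have "(\<Sum>z\<in>UNIV. w z * exp (s * l z)) \<le> (\<Sum>z\<in>UNIV. w z * (1 + s * l z + (s * l z)\<^sup>2))"
    using sl by (intro sum_mono mult_left_mono w0 exp_le_quadratic)
  also have "\<dots> = 1 + s * (\<Sum>z\<in>UNIV. w z * l z) + s\<^sup>2 * (\<Sum>z\<in>UNIV. w z * (l z)\<^sup>2)"
    by (simp add: algebra_simps sum.distrib sum_distrib_left power_mult_distrib w1)
  also have "\<dots> \<le> 1 + s * (\<Sum>z\<in>UNIV. w z * l z) + s\<^sup>2 * M\<^sup>2"
  proof -
    have "(\<Sum>z\<in>UNIV. w z * (l z)\<^sup>2) \<le> (\<Sum>z\<in>UNIV. w z * M\<^sup>2)"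
      using l2 w0 by (intro sum_mono mult_left_mono)
    also have "\<dots> = M\<^sup>2" using w1 by (simp add: sum_distrib_right[symmetric])
    finally show ?thesis by (simp add: mult_left_mono)
  qed
  also have "\<dots> \<le> exp (s * (\<Sum>z\<in>UNIV. w z * l z) + s\<^sup>2 * M\<^sup>2)"
    using exp_ge_add_one_self[of "s * (\<Sum>z\<in>UNIV. w z * l z) + s\<^sup>2 * M\<^sup>2"] by (simp only: add.assoc)
  finally show ?thesis .
qed

text \<open>The tilt \<open>s\<close> depends only on \<open>M\<close> and \<open>\<delta>\<close>, so one \<open>s\<close> serves a whole family of
  log-ratios bounded by \<open>M\<close>.\<close>

lemma exists_tilt_exp_moment_le:
  assumes "0 \<le> M" "0 < \<delta>"
  obtains s where "0 < s"
    and "\<And>w l :: 'z::finite \<Rightarrow> real. (\<And>z. 0 \<le> w z) \<Longrightarrow> (\<Sum>z\<in>UNIV. w z) = 1 \<Longrightarrow>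
           (\<And>z. \<bar>l z\<bar> \<le> M) \<Longrightarrow>
           (\<Sum>z\<in>UNIV. w z * exp (s * l z)) \<le> exp (s * ((\<Sum>z\<in>UNIV. w z * l z) + \<delta> / 2))"
proof
  define N where "N = M + 1"
  have N1: "1 \<le> N" using assms by (simp add: N_def)
  define s where "s = min (1 / N) (\<delta> / (2 * N\<^sup>2))"
  show s0: "0 < s" using N1 assms by (simp add: s_def)
  have "s * N \<le> 1 / N * N" using N1 by (intro mult_right_mono) (auto simp: s_def)
  then have sN: "s * N \<le> 1" using N1 by simp
  have "s * N\<^sup>2 \<le> \<delta> / (2 * N\<^sup>2) * N\<^sup>2" by (intro mult_right_mono) (auto simp: s_def)
  then have "s * (s * N\<^sup>2) \<le> s * (\<delta> / 2)" using N1 s0 by (intro mult_left_mono) auto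
  then have sN2: "s\<^sup>2 * N\<^sup>2 \<le> s * (\<delta> / 2)" by (simp add: power2_eq_square ac_simps)
  fix w l :: "'z \<Rightarrow> real"
  assume w: "\<And>z. 0 \<le> w z" "(\<Sum>z\<in>UNIV. w z) = 1" and l: "\<And>z. \<bar>l z\<bar> \<le> M"
  have lN: "\<bar>l z\<bar> \<le> N" for z unfolding N_def using l[of z] by linarith
  have "(\<Sum>z\<in>UNIV. w z * exp (s * l z)) \<le> exp (s * (\<Sum>z\<in>UNIV. w z * l z) + s\<^sup>2 * N\<^sup>2)"
    by (rule exp_moment_le[OF w lN less_imp_le[OF s0] sN])
  also have "\<dots> \<le> exp (s * ((\<Sum>z\<in>UNIV. w z * l z) + \<delta> / 2))"
    using sN2 by (simp only: exp_le_cancel_iff distrib_left)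
  finally show "(\<Sum>z\<in>UNIV. w z * exp (s * l z)) \<le> exp (s * ((\<Sum>z\<in>UNIV. w z * l z) + \<delta> / 2))" .
qed

lemma abs_le_sum_abs_UNIV: "\<bar>f z\<bar> \<le> (\<Sum>z\<in>UNIV. \<bar>f (z::'a::finite)\<bar> :: real)"
  by (rule member_le_sum) auto

lemma eventually_exp_neg_mult_le:
  assumes "0 < a" "0 < e"
  shows "eventually (\<lambda>n. exp (- real n * a) \<le> e) sequentially"
proof -
  have "(\<lambda>n. exp (- a) ^ n) \<longlonglongrightarrow> 0" using assms by (intro LIMSEQ_power_zero) auto
  then have "eventually (\<lambda>n. exp (- a) ^ n < e) sequentially"
    using assms(2) by (rule order_tendstoD)
  then show ?thesis
    by eventually_elim (simp add: exp_of_nat_mult[symmetric] ac_simps)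
qed

lemma KL_eq_sum:
  assumes "\<And>x. x \<in> A \<Longrightarrow> P x \<noteq> 0 \<Longrightarrow> Q x \<noteq> 0"
  shows "KL A P Q = ereal (\<Sum>x\<in>A. P x * ln (P x / Q x))"
  using assms by (auto simp: KL_def intro!: sum.cong)

lemma KL_eq_ereal_imp_nonzero:
  "KL A P Q = ereal D \<Longrightarrow> x \<in> A \<Longrightarrow> P x \<noteq> 0 \<Longrightarrow> Q x \<noteq> 0"
  by (auto simp: KL_def split: if_splits)

lemma DH_ge_of_test:
  assumes T: "T \<in> tests A" and I: "typeI A F T \<le> eps" and II: "typeII A R T \<le> b"
    and b: "0 < b" and R: "\<And>z. z \<in> A \<Longrightarrow> 0 \<le> R z"
  shows "ereal (- ln b) \<le> DH eps A F R"
proof -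
  define S where "S = {typeII A R T | T. T \<in> tests A \<and> typeI A F T \<le> eps}"
  have S_nonneg: "\<forall>m\<in>S. 0 \<le> m"
    by (auto simp: S_def typeII_def tests_def intro!: sum_nonneg mult_nonneg_nonneg R)
  have TS: "typeII A R T \<in> S" using T I by (auto simp: S_def)
  have "Inf S \<le> b" using cInf_lower[OF TS] S_nonneg II by (force simp: bdd_below_def)
  moreover have "0 \<le> Inf S" using TS S_nonneg by (intro cInf_greatest) auto
  ultimately show ?thesis
    by (cases "Inf S = 0") (simp_all add: DH_def S_def[symmetric] Let_def)
qed

lemma DH_le_of_typeII_ge:
  assumes "T0 \<in> tests A" "typeI A F T0 \<le> eps"
    and "\<And>T. T \<in> tests A \<Longrightarrow> typeI A F T \<le> eps \<Longrightarrow> c \<le> typeII A R T"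
    and "0 < c"
  shows "DH eps A F R \<le> ereal (- ln c)"
proof -
  define S where "S = {typeII A R T | T. T \<in> tests A \<and> typeI A F T \<le> eps}"
  have "c \<le> Inf S"
    using assms(1-3) by (intro cInf_greatest) (auto simp: S_def)
  then show ?thesis using assms(4) by (simp add: DH_def S_def[symmetric] Let_def)
qed

text \<open>Where \<open>W \<le> \<gamma> R\<close>, every unit of \<open>W\<close>-mass a test accepts costs it at least
  \<open>1 / \<gamma>\<close> units of type II error.\<close>

lemma typeII_ge_neyman_pearson:
  assumes "finite A" "T \<in> tests A" "\<And>z. z \<in> A \<Longrightarrow> 0 \<le> W z" "\<And>z. z \<in> A \<Longrightarrow> 0 \<le> R z"
    and "sum W A = 1" "(\<Sum>z\<in>A. W z * (1 - T z)) \<le> eps" "0 < \<gamma>"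
  shows "(1 - eps - (\<Sum>z\<in>A. if \<gamma> * R z < W z then W z else 0)) / \<gamma> \<le> typeII A R T"
proof -
  have T01: "0 \<le> T z" "T z \<le> 1" if "z \<in> A" for z
    using assms(2) that by (auto simp: tests_def)
  have pointwise: "W z * T z - (if \<gamma> * R z < W z then W z else 0) \<le> \<gamma> * (R z * T z)"
    if z: "z \<in> A" for z
  proof -
    have "W z * T z \<le> W z" "0 \<le> \<gamma> * (R z * T z)"
      using T01[OF z] assms(3,4)[OF z] assms(7) by (simp_all add: mult_left_le)
    moreover have "W z \<le> \<gamma> * R z \<Longrightarrow> W z * T z \<le> \<gamma> * (R z * T z)"
      using T01[OF z] by (simp add: mult_right_mono mult.assoc[symmetric])
    ultimately show ?thesis by auto
  qed
  have "1 - eps \<le> (\<Sum>z\<in>A. W z * T z)"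
    using assms(5,6) by (simp add: algebra_simps sum_subtractf)
  then have "1 - eps - (\<Sum>z\<in>A. if \<gamma> * R z < W z then W z else 0)
      \<le> (\<Sum>z\<in>A. W z * T z - (if \<gamma> * R z < W z then W z else 0))"
    by (simp add: sum_subtractf)
  also have "\<dots> \<le> \<gamma> * typeII A R T"
    unfolding typeII_def sum_distrib_left by (intro sum_mono pointwise)
  finally show ?thesis using assms(7) by (simp add: divide_le_eq mult.commute)
qed

definition lr_test :: "('z \<Rightarrow> real) \<Rightarrow> ('z \<Rightarrow> real) \<Rightarrow> real \<Rightarrow> 'z list \<Rightarrow> real" where
  "lr_test a b \<gamma> zs = (if prod_list (map a zs) \<le> \<gamma> * prod_list (map b zs) then 1 else 0)"

lemma lr_test_in_tests: "lr_test a b \<gamma> \<in> tests A"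
  by (simp add: lr_test_def tests_def)

lemma one_minus_lr_test_le:
  fixes a b :: "'z \<Rightarrow> real"
  assumes pos: "\<And>z. z \<in> set zs \<Longrightarrow> 0 < a z \<and> 0 < b z" and s: "0 \<le> s"
  shows "1 - lr_test a b (exp c) zs \<le> exp (- (s * c)) * prod_list (map (\<lambda>z. exp (s * ln (a z / b z))) zs)"
proof (cases "prod_list (map a zs) \<le> exp c * prod_list (map b zs)")
  case False
  have pa: "0 < prod_list (map a zs)" and pb: "0 < prod_list (map b zs)"
    using pos by (auto intro!: prod_list_map_pos)
  have "exp c < prod_list (map a zs) / prod_list (map b zs)"
    using False pb by (simp add: field_simps)
  then have "c < ln (prod_list (map (\<lambda>z. a z / b z) zs))"
    using pa pb by (metis divide_pos_pos exp_less_cancel_iff exp_ln prod_list_map_divide)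
  also have "\<dots> = sum_list (map (\<lambda>z. ln (a z / b z)) zs)"
    using pos by (intro ln_prod_list_map) simp
  finally have "exp (s * c) \<le> prod_list (map (\<lambda>z. exp (s * ln (a z / b z))) zs)"
    using s by (simp add: prod_list_map_exp sum_list_const_mult mult_left_mono)
  then show ?thesis using False by (simp add: lr_test_def exp_minus field_simps)
qed (simp add: lr_test_def prod_list_map_nonneg)

lemma iid_product_in_nullFamily:
  fixes QY :: "'y::finite \<Rightarrow> real"
  assumes "is_dist UNIV QY"
  shows "(\<lambda>zs. prod_list (map (\<lambda>(x, y). PX x * QY y) zs)) \<in> nullFamily PX n"
proof -
  have "is_dist (words UNIV n) (iid QY)"
    using assms by (auto simp: is_dist_def sum_iid iid_nonneg)
  then show ?thesis
    unfolding nullFamily_def by (auto simp: iid_map_fst_mult_iid_map_snd)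
qed

lemma nullFamily_nonempty: "nullFamily PX n \<noteq> ({} :: (('x \<times> 'y::finite) list \<Rightarrow> real) set)"
proof -
  have "is_dist (UNIV :: 'y set) (\<lambda>_. 1 / real CARD('y))"
    by (simp add: is_dist_def)
  from iid_product_in_nullFamily[OF this] show ?thesis by blast
qed

text \<open>Every member of the null family is a mixture over output sequences \<open>ys\<close>, so its
  acceptance error is bounded by the worst fixed \<open>ys\<close>.\<close>

lemma sum_nullFamily_le:
  fixes T :: "('x \<times> 'y) list \<Rightarrow> real"
  assumes "Q \<in> nullFamily PX n"
    and "\<And>ys. ys \<in> words (UNIV :: 'y set) n \<Longrightarrow>
           (\<Sum>xs\<in>words UNIV n. iid PX xs * (1 - T (zip xs ys))) \<le> r"
  shows "(\<Sum>zs\<in>words UNIV n. Q zs * (1 - T zs)) \<le> r"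
proof -
  obtain QYn where QYn: "is_dist (words UNIV n) QYn"
    and Q: "Q = (\<lambda>zs. iid PX (map fst zs) * QYn (map snd zs))"
    using assms(1) by (auto simp: nullFamily_def)
  have "(\<Sum>zs\<in>words UNIV n. Q zs * (1 - T zs))
      = (\<Sum>ys\<in>words UNIV n. QYn ys * (\<Sum>xs\<in>words UNIV n. iid PX xs * (1 - T (zip xs ys))))"
    unfolding UNIV_Times_UNIV[symmetric] sum_words_times
    by (intro sum.cong refl) (auto simp: Q sum_distrib_left words_def ac_simps)
  also have "\<dots> \<le> (\<Sum>ys\<in>words UNIV n. QYn ys * r)"
    using QYn assms(2) by (intro sum_mono mult_left_mono) (auto simp: is_dist_def)
  also have "\<dots> = r"
    using QYn by (simp add: is_dist_def sum_distrib_right[symmetric])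
  finally show ?thesis .
qed

lemma typeI_nullFamily_le:
  fixes T :: "('x \<times> 'y::finite) list \<Rightarrow> real"
  assumes "\<And>ys. ys \<in> words (UNIV :: 'y set) n \<Longrightarrow>
             (\<Sum>xs\<in>words UNIV n. iid PX xs * (1 - T (zip xs ys))) \<le> r"
  shows "typeI (words UNIV n) (nullFamily PX n) T \<le> r"
  unfolding typeI_def
  by (rule cSUP_least[OF nullFamily_nonempty]) (rule sum_nullFamily_le[OF _ assms])

lemma sum_le_typeI_nullFamily:
  fixes T :: "('x::finite \<times> 'y::finite) list \<Rightarrow> real"
  assumes T: "T \<in> tests (words UNIV n)"
    and PX: "\<And>x. 0 \<le> PX x" "(\<Sum>x\<in>UNIV. PX x) = 1"
    and Q: "Q \<in> nullFamily PX n"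
  shows "(\<Sum>zs\<in>words UNIV n. Q zs * (1 - T zs)) \<le> typeI (words UNIV n) (nullFamily PX n) T"
proof -
  have "(\<Sum>xs\<in>words UNIV n. iid PX xs * (1 - T (zip xs ys))) \<le> 1"
    if "ys \<in> words UNIV n" for ys
  proof -
    have "(\<Sum>xs\<in>words UNIV n. iid PX xs * (1 - T (zip xs ys))) \<le> (\<Sum>xs\<in>words UNIV n. iid PX xs)"
      using T that PX(1)
      by (intro sum_mono) (auto simp: tests_def words_def mult_left_le iid_nonneg)
    then show ?thesis by (simp add: sum_iid PX(2))
  qed
  then have "bdd_above ((\<lambda>Q. \<Sum>zs\<in>words UNIV n. Q zs * (1 - T zs)) ` nullFamily PX n)"
    by (intro bdd_aboveI2 sum_nullFamily_le)
  from cSUP_upper[OF Q this] show ?thesis by (simp add: typeI_def)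
qed

subsection \<open>Converse\<close>

lemma sum_iid_reject_le:
  fixes w P :: "'z \<Rightarrow> real"
  assumes w0: "\<And>z. 0 \<le> w z" and P0: "\<And>z. 0 \<le> P z" and ac: "\<And>z. w z \<noteq> 0 \<Longrightarrow> P z \<noteq> 0"
    and s: "0 \<le> s"
  shows "(\<Sum>zs\<in>words UNIV n. iid w zs * (1 - lr_test w P (exp c) zs))
           \<le> exp (- (s * c)) * (\<Sum>z\<in>UNIV. w z * exp (s * ln (w z / P z))) ^ n"
proof -
  define \<phi> where "\<phi> = (\<lambda>z. w z * exp (s * ln (w z / P z)))"
  have "iid w zs * (1 - lr_test w P (exp c) zs) \<le> exp (- (s * c)) * prod_list (map \<phi> zs)" for zs
  proof (cases "\<forall>z\<in>set zs. w z \<noteq> 0")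
    case True
    then have "\<And>z. z \<in> set zs \<Longrightarrow> 0 < w z \<and> 0 < P z"
      using w0 P0 ac by (auto simp: less_le)
    from one_minus_lr_test_le[OF this s]
    have "iid w zs * (1 - lr_test w P (exp c) zs)
        \<le> iid w zs * (exp (- (s * c)) * prod_list (map (\<lambda>z. exp (s * ln (w z / P z))) zs))"
      using w0 by (intro mult_left_mono iid_nonneg)
    then show ?thesis by (simp add: \<phi>_def iid_def prod_list_map_mult mult.left_commute)
  next
    case False
    then have "iid w zs = 0" by (auto simp: iid_def prod_list_zero_iff)
    then show ?thesis using w0 by (simp add: \<phi>_def prod_list_map_nonneg)
  qed
  then have "(\<Sum>zs\<in>words UNIV n. iid w zs * (1 - lr_test w P (exp c) zs))
      \<le> (\<Sum>zs\<in>words UNIV n. exp (- (s * c)) * prod_list (map \<phi> zs))"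
    by (intro sum_mono)
  then show ?thesis by (simp add: \<phi>_def sum_distrib_left[symmetric] sum_words_prod_list)
qed

lemma typeII_nullFamily_ge:
  fixes PXY :: "'x::finite \<times> 'y::finite \<Rightarrow> real" and QY :: "'y \<Rightarrow> real"
  defines "w \<equiv> \<lambda>(x, y). marginalX PXY x * QY y"
  assumes P: "is_dist UNIV PXY" and QY: "is_dist UNIV QY"
    and tail: "(\<Sum>zs\<in>words UNIV n. iid w zs * (1 - lr_test w PXY (exp c) zs)) \<le> (1 - eps) / 2"
    and T: "T \<in> tests (words UNIV n)"
    and TI: "typeI (words UNIV n) (nullFamily (marginalX PXY) n) T \<le> eps"
  shows "exp (- c) * ((1 - eps) / 2) \<le> typeII (words UNIV n) (iid PXY) T"
proof -
  have P0: "0 \<le> PXY z" for z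
    using is_dist_nonneg[OF P] by simp
  have w: "is_dist UNIV w"
    unfolding w_def by (rule is_dist_marginalX_times[OF P QY])
  have w0: "0 \<le> w z" for z
    using is_dist_nonneg[OF w] by simp
  have w1: "(\<Sum>zs\<in>words UNIV n. iid w zs) = 1"
    using w by (simp add: is_dist_def sum_iid)
  have accept: "(\<Sum>zs\<in>words UNIV n. iid w zs * (1 - T zs)) \<le> eps"
    using sum_le_typeI_nullFamily[OF T marginalX_nonneg[OF P] sum_marginalX[OF P]]
      iid_product_in_nullFamily[OF QY] TI
    by (fastforce simp: w_def iid_def)
  have "(\<Sum>zs\<in>words UNIV n. if exp c * iid PXY zs < iid w zs then iid w zs else 0)
      = (\<Sum>zs\<in>words UNIV n. iid w zs * (1 - lr_test w PXY (exp c) zs))"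
    by (intro sum.cong) (auto simp: lr_test_def iid_def)
  with typeII_ge_neyman_pearson[where W = "iid w" and R = "iid PXY" and \<gamma> = "exp c",
      OF finite_words[OF finite_class.finite_UNIV] T iid_nonneg[OF w0] iid_nonneg[OF P0] w1 accept
      exp_gt_zero]
  have "(1 - eps - (\<Sum>zs\<in>words UNIV n. iid w zs * (1 - lr_test w PXY (exp c) zs))) / exp c
      \<le> typeII (words UNIV n) (iid PXY) T"
    by simp
  moreover have "(1 - eps) / 2 / exp c
      \<le> (1 - eps - (\<Sum>zs\<in>words UNIV n. iid w zs * (1 - lr_test w PXY (exp c) zs))) / exp c"
    using tail by (intro divide_right_mono) auto
  ultimately have "(1 - eps) / 2 / exp c \<le> typeII (words UNIV n) (iid PXY) T"
    by (rule order_trans[rotated])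
  moreover have "exp (- c) * ((1 - eps) / 2) = (1 - eps) / 2 / exp c"
    by (simp add: exp_minus inverse_eq_divide)
  ultimately show ?thesis by (simp only:)
qed

lemma eventually_iid_reject_le:
  fixes w P :: "'z::finite \<Rightarrow> real"
  assumes w0: "\<And>z. 0 \<le> w z" and w1: "(\<Sum>z\<in>UNIV. w z) = 1" and P0: "\<And>z. 0 \<le> P z"
    and ac: "\<And>z. w z \<noteq> 0 \<Longrightarrow> P z \<noteq> 0" and \<delta>: "0 < \<delta>" and t: "0 < t"
  defines "D \<equiv> \<Sum>z\<in>UNIV. w z * ln (w z / P z)"
  shows "eventually (\<lambda>n. (\<Sum>zs\<in>words UNIV n.
           iid w zs * (1 - lr_test w P (exp (real n * (D + \<delta>))) zs)) \<le> t) sequentially"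
proof -
  define l where "l = (\<lambda>z. ln (w z / P z))"
  define M where "M = (\<Sum>z\<in>UNIV. \<bar>l z\<bar>)"
  have M0: "0 \<le> M" by (simp add: M_def sum_nonneg)
  obtain s where s: "0 < s" and mgf: "\<And>w' l' :: 'z \<Rightarrow> real. (\<And>z. 0 \<le> w' z) \<Longrightarrow>
      (\<Sum>z\<in>UNIV. w' z) = 1 \<Longrightarrow> (\<And>z. \<bar>l' z\<bar> \<le> M) \<Longrightarrow>
      (\<Sum>z\<in>UNIV. w' z * exp (s * l' z)) \<le> exp (s * ((\<Sum>z\<in>UNIV. w' z * l' z) + \<delta> / 2))"
    using exists_tilt_exp_moment_le[OF M0 \<delta>] by blast
  have mgf_w: "(\<Sum>z\<in>UNIV. w z * exp (s * l z)) \<le> exp (s * (D + \<delta> / 2))"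
    using mgf[OF w0 w1 abs_le_sum_abs_UNIV[of l, folded M_def]] by (simp add: D_def l_def)
  have "eventually (\<lambda>n. exp (- real n * (s * \<delta> / 2)) \<le> t) sequentially"
    using s \<delta> t by (intro eventually_exp_neg_mult_le) auto
  then show ?thesis
  proof eventually_elim
    fix n assume n: "exp (- real n * (s * \<delta> / 2)) \<le> t"
    define c where "c = real n * (D + \<delta>)"
    have "(\<Sum>zs\<in>words UNIV n. iid w zs * (1 - lr_test w P (exp c) zs))
        \<le> exp (- (s * c)) * (\<Sum>z\<in>UNIV. w z * exp (s * l z)) ^ n"
      using sum_iid_reject_le[OF w0 P0 ac less_imp_le[OF s]] by (simp add: l_def)
    also have "\<dots> \<le> exp (- (s * c)) * exp (s * (D + \<delta> / 2)) ^ n"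
      using mgf_w w0 by (intro mult_left_mono power_mono) (auto intro: sum_nonneg)
    also have "\<dots> = exp (- real n * (s * \<delta> / 2))"
      by (simp add: c_def exp_of_nat_mult[symmetric] exp_add[symmetric] algebra_simps)
    finally show "(\<Sum>zs\<in>words UNIV n. iid w zs * (1 - lr_test w P (exp (real n * (D + \<delta>))) zs)) \<le> t"
      using n by (simp add: c_def)
  qed
qed

lemma eventually_DH_le:
  fixes PXY :: "'x::finite \<times> 'y::finite \<Rightarrow> real" and QY :: "'y \<Rightarrow> real"
  assumes P: "is_dist UNIV PXY" and QY: "is_dist UNIV QY" and eps: "0 < eps" "eps < 1"
    and K: "KL UNIV (\<lambda>(x, y). marginalX PXY x * QY y) PXY = ereal D" and \<delta>: "0 < \<delta>"
  shows "eventually (\<lambda>n. DH eps (words UNIV n) (nullFamily (marginalX PXY) n) (iid PXY)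
           \<le> ereal (real n * (D + \<delta>) - ln ((1 - eps) / 2))) sequentially"
proof -
  define w where "w = (\<lambda>(x, y). marginalX PXY x * QY y)"
  have P0: "\<And>z. 0 \<le> PXY z" using is_dist_nonneg[OF P] by simp
  have w: "is_dist UNIV w"
    unfolding w_def by (rule is_dist_marginalX_times[OF P QY])
  have w0: "\<And>z. 0 \<le> w z" and w1: "(\<Sum>z\<in>UNIV. w z) = 1"
    using is_dist_nonneg[OF w] w by (simp_all add: is_dist_def)
  have ac: "\<And>z. w z \<noteq> 0 \<Longrightarrow> PXY z \<noteq> 0"
    using KL_eq_ereal_imp_nonzero[OF K[folded w_def]] by blast
  have D: "D = (\<Sum>z\<in>UNIV. w z * ln (w z / PXY z))"
    using KL_eq_sum[of UNIV w PXY] ac K by (simp add: w_def)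
  have "eventually (\<lambda>n. (\<Sum>zs\<in>words UNIV n.
      iid w zs * (1 - lr_test w PXY (exp (real n * (D + \<delta>))) zs)) \<le> (1 - eps) / 2) sequentially"
    unfolding D using eps by (intro eventually_iid_reject_le w0 w1 P0 ac \<delta>) auto
  then show ?thesis
  proof eventually_elim
    fix n
    define c where "c = real n * (D + \<delta>)"
    assume "(\<Sum>zs\<in>words UNIV n. iid w zs * (1 - lr_test w PXY (exp (real n * (D + \<delta>))) zs))
        \<le> (1 - eps) / 2"
    then have tail: "(\<Sum>zs\<in>words UNIV n. iid w zs * (1 - lr_test w PXY (exp c) zs)) \<le> (1 - eps) / 2"
      by (simp add: c_def)
    have "typeI (words UNIV n) (nullFamily (marginalX PXY) n) (\<lambda>_ :: ('x \<times> 'y) list. 1) \<le> eps"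
      by (rule typeI_nullFamily_le) (use eps in simp)
    then have "DH eps (words UNIV n) (nullFamily (marginalX PXY) n) (iid PXY)
        \<le> ereal (- ln (exp (- c) * ((1 - eps) / 2)))"
      using typeII_nullFamily_ge[OF P QY tail[unfolded w_def]] eps
      by (intro DH_le_of_typeII_ge[of "\<lambda>_. 1"]) (auto simp: tests_def)
    also have "- ln (exp (- c) * ((1 - eps) / 2)) = c - ln ((1 - eps) / 2)"
      using eps ln_mult[of "exp (- c)" "(1 - eps) / 2"] by simp
    finally show "DH eps (words UNIV n) (nullFamily (marginalX PXY) n) (iid PXY)
        \<le> ereal (real n * (D + \<delta>) - ln ((1 - eps) / 2))"
      by (simp add: c_def)
  qed
qed

subsection \<open>Achievability\<close>

lemma typeII_lr_test_le:
  assumes "\<And>z. 0 \<le> R z" "\<And>z. R z \<le> a z" "\<And>z. 0 \<le> b z" "0 \<le> \<gamma>"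
  shows "typeII (words A n) (iid R) (lr_test a b \<gamma>) \<le> \<gamma> * (\<Sum>z\<in>A. b z) ^ n"
proof -
  have "iid R zs * lr_test a b \<gamma> zs \<le> \<gamma> * prod_list (map b zs)" for zs
  proof -
    have "iid R zs \<le> prod_list (map a zs)"
      unfolding iid_def using assms(1,2) by (intro prod_list_map_mono) auto
    moreover have "0 \<le> \<gamma> * prod_list (map b zs)"
      using assms(3,4) by (simp add: prod_list_map_nonneg)
    ultimately show ?thesis by (simp add: lr_test_def)
  qed
  then have "typeII (words A n) (iid R) (lr_test a b \<gamma>) \<le> (\<Sum>zs\<in>words A n. \<gamma> * prod_list (map b zs))"
    unfolding typeII_def by (intro sum_mono)
  then show ?thesis by (simp add: sum_distrib_left[symmetric] sum_words_prod_list)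
qed

lemma iid_mult_reject_le:
  fixes PX :: "'x \<Rightarrow> real" and G :: "'y \<Rightarrow> real"
  assumes PX0: "\<And>x. 0 \<le> PX x" and a: "\<And>z. 0 < a z" and G: "\<And>y. 0 < G y" and s: "0 \<le> s"
    and len: "length xs = length ys"
  shows "iid PX xs * (1 - lr_test a (\<lambda>(x, y). PX x * G y) (exp (real (length xs) * \<delta>)) (zip xs ys))
           \<le> prod_list (map (\<lambda>(x, y). PX x * exp (s * (ln (a (x, y) / (PX x * G y)) - \<delta>))) (zip xs ys))"
proof (cases "\<forall>z\<in>set (zip xs ys). 0 < PX (fst z)")
  case True
  let ?b = "\<lambda>(x, y). PX x * G y"
  have "\<And>z. z \<in> set (zip xs ys) \<Longrightarrow> 0 < a z \<and> 0 < ?b z"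
    using True a G by auto
  from one_minus_lr_test_le[OF this s]
  have "iid PX xs * (1 - lr_test a ?b (exp (real (length xs) * \<delta>)) (zip xs ys))
      \<le> iid PX xs * (exp (- (s * (real (length xs) * \<delta>)))
           * prod_list (map (\<lambda>z. exp (s * ln (a z / ?b z))) (zip xs ys)))"
    using PX0 by (intro mult_left_mono iid_nonneg)
  also have "exp (- (s * (real (length xs) * \<delta>))) = prod_list (map (\<lambda>_. exp (- (s * \<delta>))) (zip xs ys))"
    using len by (simp add: map_replicate_const exp_of_nat_mult[symmetric] ac_simps)
  finally show ?thesis
    unfolding iid_eq_prod_list_zip[OF len, of PX] prod_list_map_mult[symmetric]
    by (simp add: case_prod_unfold right_diff_distrib exp_diff exp_minus divide_inverse ac_simps)
next
  case False
  then have "iid PX xs = 0"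
    using PX0 by (force simp: iid_eq_prod_list_zip[OF len] prod_list_zero_iff less_le)
  then show ?thesis
    using PX0 by (simp add: prod_list_map_nonneg case_prod_unfold)
qed

lemma typeI_nullFamily_lr_test_le:
  fixes PX :: "'x::finite \<Rightarrow> real" and G :: "'y::finite \<Rightarrow> real"
  assumes PX0: "\<And>x. 0 \<le> PX x" and a: "\<And>z. 0 < a z" and G: "\<And>y. 0 < G y" and s: "0 \<le> s"
    and B: "\<And>y. (\<Sum>x\<in>UNIV. PX x * exp (s * (ln (a (x, y) / (PX x * G y)) - \<delta>))) \<le> B"
  shows "typeI (words UNIV n) (nullFamily PX n) (lr_test a (\<lambda>(x, y). PX x * G y) (exp (real n * \<delta>)))
           \<le> B ^ n"
proof (rule typeI_nullFamily_le)
  define \<phi> where "\<phi> = (\<lambda>(x, y). PX x * exp (s * (ln (a (x, y) / (PX x * G y)) - \<delta>)))"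
  fix ys :: "'y list"
  assume "ys \<in> words UNIV n"
  then have ys: "length ys = n" by (simp add: words_def)
  have "(\<Sum>xs\<in>words UNIV n. iid PX xs * (1 - lr_test a (\<lambda>(x, y). PX x * G y) (exp (real n * \<delta>)) (zip xs ys)))
      \<le> (\<Sum>xs\<in>words UNIV n. prod_list (map \<phi> (zip xs ys)))"
  proof (intro sum_mono)
    fix xs :: "'x list"
    assume "xs \<in> words UNIV n"
    then have "length xs = length ys" "length xs = n" using ys by (simp_all add: words_def)
    from iid_mult_reject_le[where \<delta> = \<delta>, OF PX0 a G s this(1)] this(2)
    show "iid PX xs * (1 - lr_test a (\<lambda>(x, y). PX x * G y) (exp (real n * \<delta>)) (zip xs ys))
        \<le> prod_list (map \<phi> (zip xs ys))"
      by (simp add: \<phi>_def)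
  qed
  also have "\<dots> = prod_list (map (\<lambda>y. \<Sum>x\<in>UNIV. \<phi> (x, y)) ys)"
    using sum_words_prod_list_zip[where f = \<phi> and A = UNIV and ys = ys] ys by simp
  also have "\<dots> \<le> prod_list (map (\<lambda>_. B) ys)"
    using B PX0 by (intro prod_list_map_mono) (auto simp: \<phi>_def intro: sum_nonneg)
  finally show "(\<Sum>xs\<in>words UNIV n. iid PX xs * (1 - lr_test a (\<lambda>(x, y). PX x * G y) (exp (real n * \<delta>)) (zip xs ys)))
      \<le> B ^ n"
    using ys by (simp add: map_replicate_const)
qed

text \<open>The achievability test compares \<open>P\<^sub>X\<^sub>Y\<close> with \<open>P\<^sub>X \<times> trunc_geomean PXY \<tau>\<close>;
  truncating at \<open>\<tau>\<close> keeps the log-likelihood ratios bounded.\<close>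

definition trunc_geomean :: "('x::finite \<times> 'y::finite \<Rightarrow> real) \<Rightarrow> real \<Rightarrow> 'y \<Rightarrow> real" where
  "trunc_geomean PXY \<tau> y =
     exp (\<Sum>x\<in>UNIV. marginalX PXY x * ln (max (PXY (x, y)) \<tau> / marginalX PXY x))"

lemma trunc_geomean_pos: "0 < trunc_geomean PXY \<tau> y"
  by (simp add: trunc_geomean_def)

lemma sum_marginalX_ln_trunc_geomean:
  fixes PXY :: "'x::finite \<times> 'y::finite \<Rightarrow> real"
  assumes P: "is_dist UNIV PXY" and \<tau>: "0 < \<tau>"
  shows "(\<Sum>x\<in>UNIV. marginalX PXY x
           * ln (max (PXY (x, y)) \<tau> / (marginalX PXY x * trunc_geomean PXY \<tau> y))) = 0"
proof -
  let ?PX = "marginalX PXY" and ?G = "trunc_geomean PXY \<tau> y"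
  have "?PX x * ln (max (PXY (x, y)) \<tau> / (?PX x * ?G))
      = ?PX x * ln (max (PXY (x, y)) \<tau> / ?PX x) - ?PX x * ln ?G" for x
  proof (cases "?PX x = 0")
    case False
    then have "0 < ?PX x" using marginalX_nonneg[OF P, of x] by linarith
    moreover have "0 < max (PXY (x, y)) \<tau>" using \<tau> by simp
    ultimately show ?thesis
      using trunc_geomean_pos[of PXY \<tau> y] by (simp add: ln_div ln_mult algebra_simps)
  qed simp
  then have "(\<Sum>x\<in>UNIV. ?PX x * ln (max (PXY (x, y)) \<tau> / (?PX x * ?G)))
      = (\<Sum>x\<in>UNIV. ?PX x * ln (max (PXY (x, y)) \<tau> / ?PX x)) - (\<Sum>x\<in>UNIV. ?PX x) * ln ?G"
    by (simp add: sum_subtractf sum_distrib_right)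
  then show ?thesis by (simp add: sum_marginalX[OF P] trunc_geomean_def)
qed

lemma exists_tilt_trunc_geomean:
  fixes PXY :: "'x::finite \<times> 'y::finite \<Rightarrow> real"
  assumes P: "is_dist UNIV PXY" and \<tau>: "0 < \<tau>" and \<delta>: "0 < \<delta>"
  obtains s where "0 < s"
    and "\<And>y. (\<Sum>x\<in>UNIV. marginalX PXY x * exp (s * (ln (max (PXY (x, y)) \<tau>
               / (marginalX PXY x * trunc_geomean PXY \<tau> y)) - \<delta>))) \<le> exp (- (s * \<delta> / 2))"
proof -
  define PX where "PX = marginalX PXY"
  define h where "h = (\<lambda>y x. ln (max (PXY (x, y)) \<tau> / (PX x * trunc_geomean PXY \<tau> y)))"
  have PX0: "\<And>x. 0 \<le> PX x" and PX1: "(\<Sum>x\<in>UNIV. PX x) = 1"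
    using marginalX_nonneg[OF P] sum_marginalX[OF P] by (simp_all add: PX_def)
  define M where "M = (\<Sum>z\<in>UNIV. \<bar>case z of (y, x) \<Rightarrow> h y x\<bar>)"
  have h_le: "\<bar>h y x\<bar> \<le> M" for y x
    using abs_le_sum_abs_UNIV[of "\<lambda>(y, x). h y x" "(y, x)"] by (simp add: M_def)
  obtain s where s: "0 < s" and mgf: "\<And>w' l' :: 'x \<Rightarrow> real. (\<And>z. 0 \<le> w' z) \<Longrightarrow>
      (\<Sum>z\<in>UNIV. w' z) = 1 \<Longrightarrow> (\<And>z. \<bar>l' z\<bar> \<le> M) \<Longrightarrow>
      (\<Sum>z\<in>UNIV. w' z * exp (s * l' z)) \<le> exp (s * ((\<Sum>z\<in>UNIV. w' z * l' z) + \<delta> / 2))"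
    using exists_tilt_exp_moment_le[of M \<delta>] \<delta> by (auto simp: M_def intro: sum_nonneg)
  have "(\<Sum>x\<in>UNIV. PX x * exp (s * (h y x - \<delta>))) \<le> exp (- (s * \<delta> / 2))" for y
  proof -
    have "(\<Sum>x\<in>UNIV. PX x * exp (s * (h y x - \<delta>))) = (\<Sum>x\<in>UNIV. PX x * exp (s * h y x)) * exp (- (s * \<delta>))"
      by (simp add: sum_distrib_right right_diff_distrib exp_diff exp_minus divide_inverse mult.assoc)
    also have "\<dots> \<le> exp (s * (0 + \<delta> / 2)) * exp (- (s * \<delta>))"
      using mgf[of PX "h y", OF PX0 PX1 h_le] sum_marginalX_ln_trunc_geomean[OF P \<tau>, of y]
      by (simp add: h_def PX_def)
    also have "\<dots> = exp (- (s * \<delta> / 2))" by (simp add: exp_add[symmetric])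
    finally show ?thesis .
  qed
  with s that show ?thesis by (simp add: h_def PX_def)
qed

lemma eventually_DH_ge:
  fixes PXY :: "'x::finite \<times> 'y::finite \<Rightarrow> real"
  assumes P: "is_dist UNIV PXY" and eps: "0 < eps" and \<tau>: "0 < \<tau>" and \<delta>: "0 < \<delta>"
  shows "eventually (\<lambda>n. ereal (real n * (- \<delta> - ln (\<Sum>y\<in>UNIV. trunc_geomean PXY \<tau> y)))
           \<le> DH eps (words UNIV n) (nullFamily (marginalX PXY) n) (iid PXY)) sequentially"
proof -
  define PX where "PX = marginalX PXY"
  define G where "G = trunc_geomean PXY \<tau>"
  define a where "a = (\<lambda>z. max (PXY z) \<tau>)"
  have PX0: "\<And>x. 0 \<le> PX x" and PX1: "(\<Sum>x\<in>UNIV. PX x) = 1"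
    using marginalX_nonneg[OF P] sum_marginalX[OF P] by (simp_all add: PX_def)
  have P0: "\<And>z. 0 \<le> PXY z" using is_dist_nonneg[OF P] by simp
  have a0: "\<And>z. 0 < a z" and G0: "\<And>y. 0 < G y"
    using \<tau> by (simp_all add: a_def G_def trunc_geomean_pos)
  obtain s where s: "0 < s" and B: "\<And>y. (\<Sum>x\<in>UNIV. PX x * exp (s * (ln (a (x, y)
      / (PX x * G y)) - \<delta>))) \<le> exp (- (s * \<delta> / 2))"
    using exists_tilt_trunc_geomean[OF P \<tau> \<delta>] by (auto simp: PX_def G_def a_def)
  have "eventually (\<lambda>n. exp (- real n * (s * \<delta> / 2)) \<le> eps) sequentially"
    using s \<delta> eps by (intro eventually_exp_neg_mult_le) auto
  then show ?thesis
  proof eventually_elim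
    fix n assume n: "exp (- real n * (s * \<delta> / 2)) \<le> eps"
    let ?T = "lr_test a (\<lambda>(x, y). PX x * G y) (exp (real n * \<delta>))"
    have "typeI (words UNIV n) (nullFamily PX n) ?T \<le> exp (- (s * \<delta> / 2)) ^ n"
      using B less_imp_le[OF s] by (intro typeI_nullFamily_lr_test_le PX0 a0 G0)
    then have TI: "typeI (words UNIV n) (nullFamily PX n) ?T \<le> eps"
      using n by (simp add: exp_of_nat_mult[symmetric] mult.commute)
    have "typeII (words UNIV n) (iid PXY) ?T
        \<le> exp (real n * \<delta>) * (\<Sum>z\<in>UNIV. case z of (x, y) \<Rightarrow> PX x * G y) ^ n"
      using P0 PX0 G0 by (intro typeII_lr_test_le) (auto simp: a_def less_imp_le)
    also have "(\<Sum>z\<in>UNIV. case z of (x, y) \<Rightarrow> PX x * G y) = (\<Sum>x\<in>UNIV. PX x) * (\<Sum>y\<in>UNIV. G y)"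
      by (simp add: sum_product sum.cartesian_product)
    finally have TII: "typeII (words UNIV n) (iid PXY) ?T \<le> exp (real n * \<delta>) * (\<Sum>y\<in>UNIV. G y) ^ n"
      by (simp add: PX1)
    have GS: "0 < (\<Sum>y\<in>UNIV. G y)" using G0 by (intro sum_pos) auto
    from DH_ge_of_test[OF lr_test_in_tests TI TII _ iid_nonneg[OF P0]] GS
    have "ereal (- ln (exp (real n * \<delta>) * (\<Sum>y\<in>UNIV. G y) ^ n))
        \<le> DH eps (words UNIV n) (nullFamily PX n) (iid PXY)" by simp
    then show "ereal (real n * (- \<delta> - ln (\<Sum>y\<in>UNIV. trunc_geomean PXY \<tau> y)))
        \<le> DH eps (words UNIV n) (nullFamily (marginalX PXY) n) (iid PXY)"
      using GS by (simp add: ln_mult ln_realpow algebra_simps PX_def G_def)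
  qed
qed

subsection \<open>The optimal output distribution\<close>

text \<open>The pointwise limit of \<open>trunc_geomean PXY \<tau>\<close> as \<open>\<tau> \<rightarrow> 0\<close>, with the factors for
  \<open>P\<^sub>X(x) = 0\<close> and \<open>P\<^sub>X\<^sub>Y(x,y) = 0\<close> written out; normalised, it is the minimiser in
  \<open>U(X;Y)\<close>.\<close>

definition geomean :: "('x::finite \<times> 'y::finite \<Rightarrow> real) \<Rightarrow> 'y \<Rightarrow> real" where
  "geomean PXY y = (\<Prod>x\<in>UNIV.
     if marginalX PXY x = 0 then 1
     else if PXY (x, y) = 0 then 0
     else exp (marginalX PXY x * ln (PXY (x, y) / marginalX PXY x)))"

lemma geomean_nonneg: "0 \<le> geomean PXY y"
  unfolding geomean_def by (intro prod_nonneg) auto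

lemma tendsto_exp_mult_ln_divide_at_right_0:
  "0 < (p::real) \<Longrightarrow> ((\<lambda>t. exp (p * ln (t / p))) \<longlongrightarrow> 0) (at_right 0)"
  by real_asymp

lemma tendsto_trunc_geomean:
  fixes PXY :: "'x::finite \<times> 'y::finite \<Rightarrow> real"
  assumes P: "is_dist UNIV PXY"
  shows "((\<lambda>\<tau>. trunc_geomean PXY \<tau> y) \<longlongrightarrow> geomean PXY y) (at_right 0)"
  unfolding trunc_geomean_def geomean_def exp_sum[OF finite]
proof (intro tendsto_prod)
  fix x
  let ?p = "marginalX PXY x"
  show "((\<lambda>\<tau>. exp (?p * ln (max (PXY (x, y)) \<tau> / ?p))) \<longlongrightarrow>
    (if ?p = 0 then 1 else if PXY (x, y) = 0 then 0 else exp (?p * ln (PXY (x, y) / ?p)))) (at_right 0)"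
  proof (cases "?p = 0")
    case False
    then have p: "0 < ?p" using marginalX_nonneg[OF P, of x] by linarith
    show ?thesis
    proof (cases "PXY (x, y) = 0")
      case True
      have "((\<lambda>t. exp (?p * ln (t / ?p))) \<longlongrightarrow> 0) (at_right 0)"
        using p by (rule tendsto_exp_mult_ln_divide_at_right_0)
      moreover have "eventually (\<lambda>\<tau>. exp (?p * ln (\<tau> / ?p)) = exp (?p * ln (max (PXY (x, y)) \<tau> / ?p))) (at_right 0)"
        using True by (auto simp: eventually_at_right_field intro!: exI[of _ 1])
      ultimately have "((\<lambda>\<tau>. exp (?p * ln (max (PXY (x, y)) \<tau> / ?p))) \<longlongrightarrow> 0) (at_right 0)"
        by (rule Lim_transform_eventually)
      then show ?thesis using False True by simp
    next
      case nonzero: False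
      then have "0 < PXY (x, y)" using is_dist_nonneg[OF P, of "(x, y)"] by simp
      then have "eventually (\<lambda>\<tau>. exp (?p * ln (PXY (x, y) / ?p)) = exp (?p * ln (max (PXY (x, y)) \<tau> / ?p))) (at_right 0)"
        by (auto simp: eventually_at_right_field intro!: exI[of _ "PXY (x, y)"])
      from Lim_transform_eventually[OF tendsto_const this]
      show ?thesis using False nonzero by simp
    qed
  qed simp
qed

lemma geomean_nonzero:
  fixes PXY :: "'x::finite \<times> 'y::finite \<Rightarrow> real"
  assumes "geomean PXY y \<noteq> 0"
  shows "\<And>x. marginalX PXY x \<noteq> 0 \<Longrightarrow> PXY (x, y) \<noteq> 0"
    and "ln (geomean PXY y) = (\<Sum>x\<in>UNIV. marginalX PXY x * ln (PXY (x, y) / marginalX PXY x))"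
proof -
  have factor: "(if marginalX PXY x = 0 then 1 else if PXY (x, y) = 0 then 0
      else exp (marginalX PXY x * ln (PXY (x, y) / marginalX PXY x))) \<noteq> 0" for x
    using assms unfolding geomean_def by (simp add: prod_zero_iff)
  show "PXY (x, y) \<noteq> 0" if "marginalX PXY x \<noteq> 0" for x
    using factor[of x] that by auto
  have "(if marginalX PXY x = 0 then 1 else if PXY (x, y) = 0 then 0
      else exp (marginalX PXY x * ln (PXY (x, y) / marginalX PXY x)))
      = exp (marginalX PXY x * ln (PXY (x, y) / marginalX PXY x))" for x
    using factor[of x] by (auto split: if_splits)
  then have "geomean PXY y = exp (\<Sum>x\<in>UNIV. marginalX PXY x * ln (PXY (x, y) / marginalX PXY x))"
    unfolding geomean_def exp_sum[OF finite] by simp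
  then show "ln (geomean PXY y) = (\<Sum>x\<in>UNIV. marginalX PXY x * ln (PXY (x, y) / marginalX PXY x))"
    by simp
qed

lemma sum_marginalX_mult_ln_ratio:
  fixes PXY :: "'x::finite \<times> 'y::finite \<Rightarrow> real"
  assumes P: "is_dist UNIV PXY" and G: "geomean PXY y \<noteq> 0" and c: "0 < c"
  shows "(\<Sum>x\<in>UNIV. marginalX PXY x * c * ln (marginalX PXY x * c / PXY (x, y)))
           = c * (ln c - ln (geomean PXY y))"
proof -
  let ?PX = "marginalX PXY"
  have "?PX x * c * ln (?PX x * c / PXY (x, y)) = c * (?PX x * ln c - ?PX x * ln (PXY (x, y) / ?PX x))"
    for x
  proof (cases "?PX x = 0")
    case False
    then have "0 < ?PX x" "0 < PXY (x, y)"
      using marginalX_nonneg[OF P, of x] is_dist_nonneg[OF P, of "(x, y)"] geomean_nonzero(1)[OF G]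
      by (auto simp: order_le_neq_trans)
    then have "ln (?PX x * c / PXY (x, y)) = ln c - ln (PXY (x, y) / ?PX x)"
      using c by (simp add: ln_div ln_mult)
    then show ?thesis by (simp only:) (simp add: algebra_simps)
  qed simp
  then have "(\<Sum>x\<in>UNIV. ?PX x * c * ln (?PX x * c / PXY (x, y)))
      = c * ((\<Sum>x\<in>UNIV. ?PX x) * ln c - (\<Sum>x\<in>UNIV. ?PX x * ln (PXY (x, y) / ?PX x)))"
    by (simp only: sum_distrib_left[symmetric] sum_subtractf sum_distrib_right)
  then show ?thesis
    using geomean_nonzero(2)[OF G] sum_marginalX[OF P] by simp
qed

lemma umlaut_le_geomean:
  fixes PXY :: "'x::finite \<times> 'y::finite \<Rightarrow> real"
  assumes P: "is_dist UNIV PXY" and S: "0 < (\<Sum>y\<in>UNIV. geomean PXY y)"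
  shows "umlaut PXY \<le> ereal (- ln (\<Sum>y\<in>UNIV. geomean PXY y))"
proof -
  define S where "S = (\<Sum>y\<in>UNIV. geomean PXY y)"
  define Q where "Q = (\<lambda>y. geomean PXY y / S)"
  define w where "w = (\<lambda>(x, y). marginalX PXY x * Q y)"
  have S0: "0 < S" using S by (simp add: S_def)
  have Q: "is_dist UNIV Q"
    using S0 by (auto simp: is_dist_def Q_def geomean_nonneg sum_divide_distrib[symmetric] S_def)
  have column: "(\<Sum>x\<in>UNIV. w (x, y) * ln (w (x, y) / PXY (x, y))) = - (Q y * ln S)" for y
  proof (cases "Q y = 0")
    case False
    then have G: "geomean PXY y \<noteq> 0" and "0 < Q y"
      using geomean_nonneg[of PXY y] S0 by (auto simp: Q_def)
    moreover have "ln (Q y) = ln (geomean PXY y) - ln S"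
      using G geomean_nonneg[of PXY y] S0 by (simp add: Q_def ln_div)
    ultimately show ?thesis
      using sum_marginalX_mult_ln_ratio[OF P G, of "Q y"] by (simp add: w_def)
  qed (simp add: w_def)
  have "KL UNIV w PXY = ereal (\<Sum>z\<in>UNIV. w z * ln (w z / PXY z))"
    by (intro KL_eq_sum) (use geomean_nonzero(1)[of PXY] in \<open>auto simp: w_def Q_def\<close>)
  also have "(\<Sum>z\<in>UNIV. w z * ln (w z / PXY z)) = (\<Sum>y\<in>UNIV. - (Q y * ln S))"
    unfolding UNIV_Times_UNIV[symmetric] sum.cartesian_product' sum.swap[of _ UNIV UNIV] column ..
  also have "\<dots> = - ln S"
    using Q by (simp add: is_dist_def sum_negf sum_distrib_right[symmetric])
  finally have "KL UNIV w PXY = ereal (- ln S)" .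
  moreover have "umlaut PXY \<le> KL UNIV w PXY"
    unfolding umlaut_def w_def using Q by (intro INF_lower) auto
  ultimately show ?thesis by (simp add: S_def)
qed

lemma ereal_le_divide_of_nat:
  assumes "ereal (real n * k) \<le> X" "0 < n"
  shows "ereal k \<le> X / ereal (real n)"
  using assms by (cases X) (simp_all add: field_simps)

lemma ereal_divide_of_nat_le:
  assumes "X \<le> ereal (real n * k + C)" "0 < n"
  shows "X / ereal (real n) \<le> ereal (k + C / real n)"
  using assms by (cases X) (simp_all add: field_simps)

lemma eventually_DH_rate_gt:
  fixes PXY :: "'x::finite \<times> 'y::finite \<Rightarrow> real"
  assumes P: "is_dist UNIV PXY" and eps: "0 < eps" and a: "a < umlaut PXY"
  shows "eventually (\<lambda>n. a < DH eps (words UNIV n) (nullFamily (marginalX PXY) n) (iid PXY)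
           / ereal (real n)) sequentially"
proof -
  obtain r where r: "a < ereal r" "ereal r < umlaut PXY"
    using ereal_dense2[OF a] by blast
  have "(\<Sum>y\<in>UNIV. geomean PXY y) < exp (- r)"
  proof (cases "(\<Sum>y\<in>UNIV. geomean PXY y) = 0")
    case False
    then have S: "0 < (\<Sum>y\<in>UNIV. geomean PXY y)" by (simp add: geomean_nonneg sum_nonneg order_le_neq_trans)
    have "r < - ln (\<Sum>y\<in>UNIV. geomean PXY y)"
      using less_le_trans[OF r(2) umlaut_le_geomean[OF P S]] by simp
    then have "exp (ln (\<Sum>y\<in>UNIV. geomean PXY y)) < exp (- r)" by simp
    with S show ?thesis by simp
  qed simp
  with tendsto_sum[OF tendsto_trunc_geomean[OF P]]
  have "eventually (\<lambda>\<tau>. 0 < \<tau> \<and> (\<Sum>y\<in>UNIV. trunc_geomean PXY \<tau> y) < exp (- r)) (at_right 0)"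
    by (intro eventually_conj eventually_at_right_less order_tendstoD(2)) auto
  then obtain \<tau> where \<tau>: "0 < \<tau>" "(\<Sum>y\<in>UNIV. trunc_geomean PXY \<tau> y) < exp (- r)"
    using eventually_happens'[OF trivial_limit_at_right_real] by blast
  define c where "c = (\<Sum>y\<in>UNIV. trunc_geomean PXY \<tau> y)"
  have "0 < c" unfolding c_def by (intro sum_pos) (auto simp: trunc_geomean_pos)
  with \<tau>(2) have "ln c < ln (exp (- r))" by (simp only: c_def ln_less_cancel_iff exp_gt_zero)
  then have "ln c < - r" by simp
  define \<delta> where "\<delta> = (- r - ln c) / 2"
  have \<delta>: "0 < \<delta>" and r_less: "r < - \<delta> - ln c"
    using \<open>ln c < - r\<close> by (simp_all add: \<delta>_def field_simps)
  show ?thesis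
    using eventually_DH_ge[OF P eps \<tau>(1) \<delta>] eventually_gt_at_top[of 0]
  proof eventually_elim
    case (elim n)
    then have "ereal (- \<delta> - ln c) \<le> DH eps (words UNIV n) (nullFamily (marginalX PXY) n) (iid PXY)
        / ereal (real n)"
      by (intro ereal_le_divide_of_nat) (simp_all add: c_def)
    with r(1) r_less show ?case by (meson ereal_less_eq(3) le_less_trans less_le_trans order_less_imp_le)
  qed
qed

lemma eventually_DH_rate_lt:
  fixes PXY :: "'x::finite \<times> 'y::finite \<Rightarrow> real"
  assumes P: "is_dist UNIV PXY" and eps: "0 < eps" "eps < 1" and u: "umlaut PXY < u"
  shows "eventually (\<lambda>n. DH eps (words UNIV n) (nullFamily (marginalX PXY) n) (iid PXY)
           / ereal (real n) < u) sequentially"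
proof -
  obtain QY where QY: "is_dist UNIV QY" and K: "KL UNIV (\<lambda>(x, y). marginalX PXY x * QY y) PXY < u"
    using u unfolding umlaut_def by (auto simp: INF_less_iff)
  then obtain D where D: "KL UNIV (\<lambda>(x, y). marginalX PXY x * QY y) PXY = ereal D"
    by (auto simp: KL_def split: if_splits)
  obtain b where b: "D < b" "ereal b < u"
    using ereal_dense2[of "ereal D" u] K D by auto
  define \<delta> where "\<delta> = (b - D) / 2"
  have \<delta>: "0 < \<delta>" using b by (simp add: \<delta>_def)
  define C where "C = - ln ((1 - eps) / 2)"
  have "eventually (\<lambda>n. C / real n < \<delta>) sequentially"
    using \<delta> by real_asymp
  then show ?thesis
    using eventually_DH_le[OF P QY eps D \<delta>] eventually_gt_at_top[of 0]
  proof eventually_elim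
    case (elim n)
    then have "DH eps (words UNIV n) (nullFamily (marginalX PXY) n) (iid PXY) / ereal (real n)
        \<le> ereal (D + \<delta> + C / real n)"
      by (intro ereal_divide_of_nat_le) (simp_all add: C_def)
    also have "ereal (D + \<delta> + C / real n) < ereal b"
      using add_strict_left_mono[OF elim(1), of "D + \<delta>"] by (simp add: \<delta>_def)
    finally show ?case using b(2) by simp
  qed
qed

theorem mainTheorem4:
  fixes PXY :: "'x::finite \<times> 'y::finite \<Rightarrow> real" and eps :: real
  assumes "is_dist UNIV PXY"
    and "0 < eps" and "eps < 1"
  shows "(\<lambda>n. DH eps (words UNIV n) (nullFamily (marginalX PXY) n) (iid PXY) / ereal (real n))
           \<longlonglongrightarrow> umlaut PXY"
  using eventually_DH_rate_gt[OF assms(1,2)] eventually_DH_rate_lt[OF assms]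
  by (rule order_tendstoI)

end
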